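(* Let $P$ and $Q$ be planar surfaces. If $P \rightsquigarrow Q$ and $Q \rightsquigarrow P$, then $P = Q$ (i.e. $P$ and $Q$ are the same point of $\tilde{\mathcal M}$). Consequently $\rightsquigarrow$ is a partial order on $\tilde{\mathcal M}$.
   Context: Let $\Delta$ be the open oriented topological $2$-disk with basepoint $x_0$. A pointed local homeomorphism is an orientation-preserving local homeomorphism $\phi:\Delta\to\mathbb R^2$ with $\phi(x_0)=\mathbf 0$ (this is the developing map of a translation structure on $\Delta$). Two such maps $\phi,\psi$ are isomorphic if $\psi=\phi\circ h^{-1}$ for some orientation-preserving homeomorphism $h$ of $\Delta$ fixing $x_0$. The moduli space $\tilde{\mathcal M}$ is the set of isomorphism classes. An element $P\in\tilde{\mathcal M}$ is called a planar surface; it is regarded as a topological open disk (a copy of $\Delta$ via any representative $\phi$) with a basepoint $o_P$ (the image of $x_0$) and a developing map $\mathrm{dev}_P:P\to\mathbb R^2$ (induced by $\phi$), an orientation-preserving local homeomorphism with $\mathrm{dev}_P(o_P)=\mathbf 0$; these structures are independent of the representative. For a planar surface $P$, $\mathrm{PC}(P)$ denotes the set of path-connected subsets of $P$ containing $o_P$. For $A\in\mathrm{PC}(P)$ and $B\in\mathrm{PC}(Q)$, an immersion $\iota:A\rightsquigarrow B$ is a continuous map $\iota:A\to B$ with $\iota(o_P)=o_Q$ and $\mathrm{dev}_Q\circ\iota=\mathrm{dev}_P$ on $A$; we write $A\rightsquigarrow B$ if an immersion exists. For planar surfaces, $P\rightsquigarrow Q$ means the whole surface $P$ immerses in $Q$.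 *)

theory Defs
  imports "HOL-Analysis.Analysis"
begin

text \<open>The plane R^2 is modelled by the complex numbers (standard orientation),
  the open oriented topological disk by the open unit disk with basepoint 0.\<close>

definition Disk :: "complex set" where
  "Disk = ball 0 1"

definition wind :: "(real \<Rightarrow> complex) \<Rightarrow> complex \<Rightarrow> int" where
  "wind \<gamma> p = (THE n::int. \<exists>g. continuous_on {0..1} g \<and>
       (\<forall>t\<in>{0..1}. \<gamma> t - p = exp (g t)) \<and> g 1 - g 0 = 2 * of_real pi * \<i> * of_int n)"

definition circ :: "complex \<Rightarrow> real \<Rightarrow> real \<Rightarrow> complex" where
  "circ x r t = x + of_real r * exp (2 * of_real pi * \<i> * of_real t)"

definition local_homeo :: "complex set \<Rightarrow> (complex \<Rightarrow> complex) \<Rightarrow> bool" where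
  "local_homeo U f \<longleftrightarrow> (\<forall>x\<in>U. \<exists>V g. open V \<and> x \<in> V \<and> V \<subseteq> U \<and> open (f ` V) \<and>
       homeomorphism V (f ` V) f g)"

definition orient_pres :: "complex set \<Rightarrow> (complex \<Rightarrow> complex) \<Rightarrow> bool" where
  "orient_pres U f \<longleftrightarrow> (\<forall>x\<in>U. \<exists>e>0. \<forall>r. 0 < r \<and> r < e \<longrightarrow> wind (f \<circ> circ x r) (f x) = 1)"

definition pointed_lh :: "(complex \<Rightarrow> complex) \<Rightarrow> bool" where
  "pointed_lh \<phi> \<longleftrightarrow> local_homeo Disk \<phi> \<and> orient_pres Disk \<phi> \<and> \<phi> 0 = 0"

definition iso_plh :: "(complex \<Rightarrow> complex) \<Rightarrow> (complex \<Rightarrow> complex) \<Rightarrow> bool" where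
  "iso_plh \<phi> \<psi> \<longleftrightarrow> (\<exists>h k. homeomorphism Disk Disk h k \<and> orient_pres Disk h \<and> h 0 = 0 \<and>
       (\<forall>y\<in>Disk. \<psi> y = \<phi> (k y)))"

text \<open>Immersion of the planar surface of phi into that of psi (whole surfaces):
  a continuous basepoint-preserving map commuting with the developing maps.\<close>

definition immerses :: "(complex \<Rightarrow> complex) \<Rightarrow> (complex \<Rightarrow> complex) \<Rightarrow> bool" where
  "immerses \<phi> \<psi> \<longleftrightarrow> (\<exists>\<iota>. continuous_on Disk \<iota> \<and> \<iota> ` Disk \<subseteq> Disk \<and> \<iota> 0 = 0 \<and>
       (\<forall>x\<in>Disk. \<psi> (\<iota> x) = \<phi> x))"

end

theory Submission
  imports Defs "HOL-Complex_Analysis.Riemann_Mapping"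
begin

text \<open>Given immersions \<open>\<iota>\<close> of \<open>P\<close> into \<open>Q\<close> and \<open>\<kappa>\<close> of \<open>Q\<close> into \<open>P\<close>, the composites
  \<open>\<kappa> \<circ> \<iota>\<close> and \<open>\<iota> \<circ> \<kappa>\<close> are basepoint-preserving lifts of a developing map through itself.
  Lifts through a local homeomorphism are unique on the connected disk, so both composites
  are the identity and \<open>\<iota>\<close> is a homeomorphism. It preserves orientation: near \<open>\<iota> x\<close> the
  developing map of \<open>Q\<close> is a chart onto a round ball, the image of a small circle around \<open>x\<close>
  under \<open>\<iota>\<close> is carried by this chart to a loop winding once, as is the image of a small
  circle around \<open>\<iota> x\<close>; loops in a punctured ball with equal winding numbers are homotopic
  there, and pulling the homotopy back through the chart shows that the image of the circle
  under \<open>\<iota>\<close> winds once around \<open>\<iota> x\<close>. Reflexivity, transitivity and invariance under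
  isomorphism are formal.\<close>

lemma exp_eq_1_imp_constant_on:
  fixes h :: "'a::topological_space \<Rightarrow> complex"
  assumes "connected S" "continuous_on S h" "\<And>x. x \<in> S \<Longrightarrow> exp (h x) = 1"
  shows "h constant_on S"
proof (rule continuous_discrete_range_constant[OF assms(1,2)])
  fix x assume x: "x \<in> S"
  show "\<exists>e>0. \<forall>y. y \<in> S \<and> h y \<noteq> h x \<longrightarrow> e \<le> norm (h y - h x)"
  proof (intro exI[of _ "2*pi"] conjI allI impI)
    fix y assume y: "y \<in> S \<and> h y \<noteq> h x"
    then obtain n :: int where n: "h y = h x + (of_int (2 * n) * pi) * \<i>"
      using assms(3) x exp_eq by metis
    with y have "1 \<le> \<bar>real_of_int n\<bar>" by auto
    moreover have "norm (h y - h x) = 2 * pi * \<bar>real_of_int n\<bar>"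
      using n by (simp add: norm_mult abs_mult)
    ultimately show "2 * pi \<le> norm (h y - h x)" by simp
  qed simp
qed

lemma continuous_log_increment_unique:
  fixes g1 g2 :: "real \<Rightarrow> complex"
  assumes "continuous_on {0..1} g1" "continuous_on {0..1} g2"
    and "\<And>t. t \<in> {0..1} \<Longrightarrow> exp (g1 t) = exp (g2 t)"
  shows "g1 1 - g1 0 = g2 1 - g2 0"
proof -
  have "(\<lambda>t. g1 t - g2 t) constant_on {0..1}"
    using assms by (intro exp_eq_1_imp_constant_on continuous_intros) (auto simp: exp_diff)
  then show ?thesis
    by (auto simp: constant_on_def algebra_simps)
qed

lemma wind_eq_winding_number:
  assumes "path \<gamma>" "pathfinish \<gamma> = pathstart \<gamma>" "p \<notin> path_image \<gamma>"
  shows "of_int (wind \<gamma> p) = winding_number \<gamma> p"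
proof -
  obtain n :: int where n: "winding_number \<gamma> p = of_int n"
    using integer_winding_number[OF assms] Ints_cases by metis
  obtain q where q: "path q" "pathfinish q - pathstart q = 2 * of_real pi * \<i> * of_int n"
    "\<And>t. t \<in> {0..1} \<Longrightarrow> \<gamma> t = p + exp (q t)"
    using winding_number_as_continuous_log[OF assms(1,3)] n by metis
  have "wind \<gamma> p = n"
    unfolding wind_def
  proof (rule the_equality)
    show "\<exists>g. continuous_on {0..1} g \<and> (\<forall>t\<in>{0..1}. \<gamma> t - p = exp (g t)) \<and>
        g 1 - g 0 = 2 * of_real pi * \<i> * of_int n"
      using q by (auto simp: path_def pathstart_def pathfinish_def)
    fix m :: int
    assume "\<exists>g. continuous_on {0..1} g \<and> (\<forall>t\<in>{0..1}. \<gamma> t - p = exp (g t)) \<and>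
        g 1 - g 0 = 2 * of_real pi * \<i> * of_int m"
    then obtain g where g: "continuous_on {0..1} g" "\<And>t. t \<in> {0..1} \<Longrightarrow> \<gamma> t - p = exp (g t)"
      "g 1 - g 0 = 2 * of_real pi * \<i> * of_int m" by blast
    have "g 1 - g 0 = q 1 - q 0"
      using g q by (intro continuous_log_increment_unique) (auto simp: path_def)
    then show "m = n"
      using g(3) q(2) by (simp add: pathstart_def pathfinish_def)
  qed
  with n show ?thesis by simp
qed

lemma circ_eq_circlepath: "circ x r = circlepath x r"
  by (simp add: fun_eq_iff circ_def circlepath)

lemma continuous_log_punctured_ball:
  assumes "path \<gamma>" "path_image \<gamma> \<subseteq> ball c R - {c}"
  obtains q where "path q" "pathfinish q - pathstart q = 2 * of_real pi * \<i> * winding_number \<gamma> c"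
    and "\<And>t. t \<in> {0..1} \<Longrightarrow> \<gamma> t = c + exp (q t)" "\<And>t. t \<in> {0..1} \<Longrightarrow> exp (Re (q t)) < R"
proof -
  obtain q where q: "path q" "pathfinish q - pathstart q = 2 * of_real pi * \<i> * winding_number \<gamma> c"
    "\<And>t. t \<in> {0..1} \<Longrightarrow> \<gamma> t = c + exp (q t)"
    using winding_number_as_continuous_log[of \<gamma> c] assms by blast
  moreover have "exp (Re (q t)) < R" if "t \<in> {0..1}" for t
  proof -
    have "\<gamma> t \<in> path_image \<gamma>" using that by (simp add: path_image_def)
    with assms(2) have "\<gamma> t \<in> ball c R" by blast
    then show ?thesis using q(3)[OF that] by (simp add: dist_norm)
  qed
  ultimately show ?thesis using that by blast
qed

lemma homotopic_loops_punctured_ball: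
  assumes "path \<gamma>1" "pathfinish \<gamma>1 = pathstart \<gamma>1" "path_image \<gamma>1 \<subseteq> ball c R - {c}"
    and "path \<gamma>2" "pathfinish \<gamma>2 = pathstart \<gamma>2" "path_image \<gamma>2 \<subseteq> ball c R - {c}"
    and "winding_number \<gamma>1 c = winding_number \<gamma>2 c"
  shows "homotopic_loops (ball c R - {c}) \<gamma>1 \<gamma>2"
proof -
  obtain q1 where q1: "path q1" "pathfinish q1 - pathstart q1 = 2 * of_real pi * \<i> * winding_number \<gamma>1 c"
    "\<And>t. t \<in> {0..1} \<Longrightarrow> \<gamma>1 t = c + exp (q1 t)" "\<And>t. t \<in> {0..1} \<Longrightarrow> exp (Re (q1 t)) < R"
    using continuous_log_punctured_ball[OF assms(1,3)] by blast
  obtain q2 where q2: "path q2" "pathfinish q2 - pathstart q2 = 2 * of_real pi * \<i> * winding_number \<gamma>2 c"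
    "\<And>t. t \<in> {0..1} \<Longrightarrow> \<gamma>2 t = c + exp (q2 t)" "\<And>t. t \<in> {0..1} \<Longrightarrow> exp (Re (q2 t)) < R"
    using continuous_log_punctured_ball[OF assms(4,6)] by blast
  \<comment> \<open>Interpolate linearly between the two logarithms; the modulus stays below the larger one.\<close>
  define H where "H = (\<lambda>(s, t). c + exp ((1 - of_real s) * q1 t + of_real s * q2 t))"
  show ?thesis
    unfolding homotopic_loops
  proof (intro exI conjI ballI)
    show "continuous_on ({0..1} \<times> {0..1}) H"
    proof -
      have "continuous_on ({0..1} \<times> {0..1}) (\<lambda>p. q (snd p))" if "path q" for q :: "real \<Rightarrow> complex"
        using that unfolding path_def by (rule continuous_on_compose2[OF _ continuous_on_snd]) auto
      then show ?thesis
        unfolding H_def case_prod_unfold using q1(1) q2(1) by (intro continuous_intros)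
    qed
    show "H \<in> {0..1} \<times> {0..1} \<rightarrow> ball c R - {c}"
    proof
      fix p assume "p \<in> {0..1::real} \<times> {0..1::real}"
      then obtain s t where p: "p = (s, t)" and s: "s \<in> {0..1}" and t: "t \<in> {0..1}" by blast
      have "(1 - s) * Re (q1 t) + s * Re (q2 t) \<le> max (Re (q1 t)) (Re (q2 t))"
        using s by (intro convex_bound_le) auto
      then have "exp ((1 - s) * Re (q1 t) + s * Re (q2 t)) \<le> exp (max (Re (q1 t)) (Re (q2 t)))"
        by simp
      also have "\<dots> < R"
        using q1(4)[OF t] q2(4)[OF t] by (simp add: max_def)
      finally show "H p \<in> ball c R - {c}"
        by (simp add: H_def p dist_norm)
    qed
    show "H (0, t) = \<gamma>1 t" "H (1, t) = \<gamma>2 t" if "t \<in> {0..1}" for t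
      using q1(3) q2(3) that by (simp_all add: H_def)
    show "pathfinish (H \<circ> Pair s) = pathstart (H \<circ> Pair s)" for s
    proof -
      obtain n :: int where n: "winding_number \<gamma>1 c = of_int n"
        using integer_winding_number[OF assms(1-2)] assms(3) Ints_cases by blast
      let ?q = "\<lambda>t. (1 - of_real s) * q1 t + of_real s * q2 t"
      have "?q 1 = ?q 0 + (2 * of_int n * pi) * \<i>"
        using q1(2) q2(2) assms(7) n by (simp add: pathstart_def pathfinish_def algebra_simps)
      moreover have "exp ((2 * of_int n * pi) * \<i>) = 1"
        by (rule exp_integer_2pi) simp
      ultimately have "exp (?q 1) = exp (?q 0)"
        by (simp add: exp_add)
      then show ?thesis
        by (simp add: H_def pathstart_def pathfinish_def)
    qed
  qed
qed

lemma homeomorphism_remove_point: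
  assumes "homeomorphism S T f g" "a \<in> S"
  shows "homeomorphism (S - {a}) (T - {f a}) f g"
proof (rule homeomorphism_of_subsets[OF assms(1)])
  show "f ` (S - {a}) = T - {f a}"
    using assms by (auto simp: homeomorphism_def) (metis image_eqI)+
qed auto

lemma winding_number_pullback_chart:
  assumes "homeomorphism V (ball c R) \<psi> G" and "y \<in> V" "\<psi> y = c"
    and "path \<sigma>1" "pathfinish \<sigma>1 = pathstart \<sigma>1" "path_image \<sigma>1 \<subseteq> V - {y}"
    and "path \<sigma>2" "pathfinish \<sigma>2 = pathstart \<sigma>2" "path_image \<sigma>2 \<subseteq> V - {y}"
    and "winding_number (\<psi> \<circ> \<sigma>1) c = winding_number (\<psi> \<circ> \<sigma>2) c"
  shows "winding_number \<sigma>1 y = winding_number \<sigma>2 y"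
proof -
  have "homeomorphism (V - {y}) (ball c R - {c}) \<psi> G"
    using homeomorphism_remove_point[OF assms(1,2)] assms(3) by simp
  then have \<psi>: "continuous_on (V - {y}) \<psi>" "\<psi> ` (V - {y}) = ball c R - {c}"
    and G: "continuous_on (ball c R - {c}) G" "G ` (ball c R - {c}) = V - {y}"
    and G\<psi>: "\<And>z. z \<in> V - {y} \<Longrightarrow> G (\<psi> z) = z"
    unfolding homeomorphism_def by auto
  have loop: "path (\<psi> \<circ> \<sigma>) \<and> pathfinish (\<psi> \<circ> \<sigma>) = pathstart (\<psi> \<circ> \<sigma>) \<and>
      path_image (\<psi> \<circ> \<sigma>) \<subseteq> ball c R - {c}"
    if "path \<sigma>" "pathfinish \<sigma> = pathstart \<sigma>" "path_image \<sigma> \<subseteq> V - {y}" for \<sigma>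
    using that \<psi> path_continuous_image[OF that(1) continuous_on_subset[OF \<psi>(1) that(3)]]
    by (auto simp: pathstart_def pathfinish_def path_image_compose)
  have "homotopic_loops (ball c R - {c}) (\<psi> \<circ> \<sigma>1) (\<psi> \<circ> \<sigma>2)"
    using loop[OF assms(4-6)] loop[OF assms(7-9)] assms(10)
    by (intro homotopic_loops_punctured_ball) auto
  then have pulled: "homotopic_loops (V - {y}) (G \<circ> (\<psi> \<circ> \<sigma>1)) (G \<circ> (\<psi> \<circ> \<sigma>2))"
    by (rule homotopic_loops_continuous_image[OF _ G(1)]) (use G(2) in auto)
  have undo: "homotopic_loops (V - {y}) \<sigma> (G \<circ> (\<psi> \<circ> \<sigma>))"
    if "path \<sigma>" "pathfinish \<sigma> = pathstart \<sigma>" "path_image \<sigma> \<subseteq> V - {y}" for \<sigma>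
  proof (intro homotopic_loops_eq[OF that(1,3,2)])
    show "\<sigma> t = (G \<circ> (\<psi> \<circ> \<sigma>)) t" if "t \<in> {0..1}" for t
    proof -
      have "\<sigma> t \<in> path_image \<sigma>" using that by (simp add: path_image_def)
      with \<open>path_image \<sigma> \<subseteq> V - {y}\<close> have "\<sigma> t \<in> V - {y}" by blast
      then show ?thesis using G\<psi> by simp
    qed
  qed
  have "homotopic_loops (V - {y}) \<sigma>1 \<sigma>2"
    using homotopic_loops_trans[OF homotopic_loops_trans[OF undo[OF assms(4-6)] pulled]
        homotopic_loops_sym[OF undo[OF assms(7-9)]]] .
  then have "homotopic_loops (- {y}) \<sigma>1 \<sigma>2"
    by (rule homotopic_loops_subset) blast
  then show ?thesis
    by (rule winding_number_homotopic_loops)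
qed

lemma circlepath_in_sphere: "0 \<le> r \<Longrightarrow> circlepath x r t \<in> sphere x r"
  by (simp add: circlepath dist_norm norm_mult)

lemma closed_path_circlepath_image:
  assumes "0 < r" "continuous_on (sphere x r) f"
  shows "path (f \<circ> circlepath x r)" "pathfinish (f \<circ> circlepath x r) = pathstart (f \<circ> circlepath x r)"
    and "path_image (f \<circ> circlepath x r) = f ` sphere x r"
  using assms by (auto simp: path_image_compose pathstart_compose pathfinish_compose
      intro!: path_continuous_image)

lemma wind_circ_eq_winding_number:
  assumes "0 < r" "continuous_on (sphere x r) f" "f x \<notin> f ` sphere x r"
  shows "of_int (wind (f \<circ> circ x r) (f x)) = winding_number (f \<circ> circlepath x r) (f x)"
  unfolding circ_eq_circlepath
  using closed_path_circlepath_image[OF assms(1,2)] assms(3)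
  by (intro wind_eq_winding_number) auto

lemma local_homeo_chart:
  assumes "local_homeo U f" "x \<in> U"
  obtains V g R where "open V" "x \<in> V" "V \<subseteq> U" "homeomorphism V (ball (f x) R) f g"
proof -
  obtain V g where V: "open V" "x \<in> V" "V \<subseteq> U" "open (f ` V)" "homeomorphism V (f ` V) f g"
    using assms unfolding local_homeo_def by blast
  obtain R where R: "0 < R" "ball (f x) R \<subseteq> f ` V"
    using V(2,4) open_contains_ball by blast
  define V0 where "V0 = V \<inter> f -` ball (f x) R"
  have "open V0"
    unfolding V0_def using homeomorphism_cont1[OF V(5)] V(1) by (rule continuous_open_preimage) simp
  moreover have "f ` V0 = ball (f x) R"
    using R(2) by (auto simp: V0_def)
  then have "homeomorphism V0 (ball (f x) R) f g"
    by (intro homeomorphism_of_subsets[OF V(5)]) (auto simp: V0_def)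
  ultimately show ?thesis
    using that V(2,3) R(1) by (simp add: V0_def subset_iff)
qed

lemma orient_pres_small_circles:
  assumes "local_homeo U f" "orient_pres U f" "x \<in> U"
  obtains e where "0 < e" "cball x e \<subseteq> U" "inj_on f (cball x e)"
    and "\<And>r. 0 < r \<Longrightarrow> r < e \<Longrightarrow> winding_number (f \<circ> circlepath x r) (f x) = 1"
proof -
  obtain V g where V: "open V" "x \<in> V" "V \<subseteq> U" "homeomorphism V (f ` V) f g"
    using assms(1,3) unfolding local_homeo_def by blast
  obtain e1 where e1: "0 < e1" "\<And>r. 0 < r \<and> r < e1 \<Longrightarrow> wind (f \<circ> circ x r) (f x) = 1"
    using assms(2,3) unfolding orient_pres_def by blast
  obtain e2 where e2: "0 < e2" "cball x e2 \<subseteq> V"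
    using V(1,2) open_contains_cball by blast
  have "inj_on f V"
    by (rule inj_on_inverseI[of V g]) (rule homeomorphism_apply1[OF V(4)])
  moreover have sub: "cball x (min e1 e2) \<subseteq> V"
    using e2(2) by (auto simp: subset_iff)
  ultimately have cont: "continuous_on (cball x (min e1 e2)) f" and inj: "inj_on f (cball x (min e1 e2))"
    using continuous_on_subset[OF homeomorphism_cont1[OF V(4)]] inj_on_subset by blast+
  show ?thesis
  proof (rule that[OF _ _ inj])
    fix r assume r: "0 < r" "r < min e1 e2"
    have "f x \<noteq> f z" if "z \<in> sphere x r" for z
    proof -
      have "x \<in> cball x (min e1 e2)" "z \<in> cball x (min e1 e2)" "x \<noteq> z"
        using that r e1(1) e2(1) by auto
      then show ?thesis using inj by (auto simp: inj_on_def)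
    qed
    then have "f x \<notin> f ` sphere x r" by blast
    then have "of_int (wind (f \<circ> circ x r) (f x)) = winding_number (f \<circ> circlepath x r) (f x)"
      using r cont by (intro wind_circ_eq_winding_number) (auto intro: continuous_on_subset)
    with e1(2)[of r] r show "winding_number (f \<circ> circlepath x r) (f x) = 1"
      by simp
  qed (use e1 V sub e2(1) in auto)
qed

lemma orient_pres_chart:
  assumes "local_homeo U f" "orient_pres U f" "y \<in> U"
  obtains V where "open V" "y \<in> V"
    and "\<And>\<sigma>. \<lbrakk>path \<sigma>; pathfinish \<sigma> = pathstart \<sigma>; path_image \<sigma> \<subseteq> V - {y};
          winding_number (f \<circ> \<sigma>) (f y) = 1\<rbrakk> \<Longrightarrow> winding_number \<sigma> y = 1"
proof -
  obtain V g R where V: "open V" "y \<in> V" "homeomorphism V (ball (f y) R) f g"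
    using local_homeo_chart[OF assms(1,3)] by metis
  obtain e1 where e1: "0 < e1" "\<And>r. 0 < r \<Longrightarrow> r < e1 \<Longrightarrow> winding_number (f \<circ> circlepath y r) (f y) = 1"
    using orient_pres_small_circles[OF assms] by metis
  obtain e2 where e2: "0 < e2" "cball y e2 \<subseteq> V"
    using V(1,2) open_contains_cball by blast
  define \<rho> where "\<rho> = min (e1 / 2) e2"
  have \<rho>: "0 < \<rho>" "\<rho> < e1" "cball y \<rho> \<subseteq> V"
    using e1(1) e2 subset_cball[of \<rho> e2 y] by (auto simp: \<rho>_def)
  have circle: "path (circlepath y \<rho>)" "pathfinish (circlepath y \<rho>) = pathstart (circlepath y \<rho>)"
    "path_image (circlepath y \<rho>) \<subseteq> V - {y}"
    using \<rho>(1,3) sphere_cball by auto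
  show ?thesis
  proof (rule that[OF V(1,2)])
    fix \<sigma> assume \<sigma>: "path \<sigma>" "pathfinish \<sigma> = pathstart \<sigma>" "path_image \<sigma> \<subseteq> V - {y}"
      and "winding_number (f \<circ> \<sigma>) (f y) = 1"
    then have "winding_number \<sigma> y = winding_number (circlepath y \<rho>) y"
      using e1(2)[OF \<rho>(1,2)] by (intro winding_number_pullback_chart[OF V(3,2) refl \<sigma> circle]) simp
    also have "\<dots> = 1"
      using \<rho>(1) by (rule winding_number_circlepath_centre)
    finally show "winding_number \<sigma> y = 1" .
  qed
qed

lemma orient_pres_lift:
  assumes \<phi>: "local_homeo U \<phi>" "orient_pres U \<phi>" and \<psi>: "local_homeo U' \<psi>" "orient_pres U' \<psi>"
    and \<iota>: "continuous_on U \<iota>" "\<iota> ` U \<subseteq> U'" "\<And>x. x \<in> U \<Longrightarrow> \<psi> (\<iota> x) = \<phi> x"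
  shows "orient_pres U \<iota>"
  unfolding orient_pres_def
proof
  fix x assume x: "x \<in> U"
  define y where "y = \<iota> x"
  have y: "y \<in> U'" using \<iota>(2) x by (auto simp: y_def)
  obtain V where V: "open V" "y \<in> V"
    and chart: "\<And>\<sigma>. \<lbrakk>path \<sigma>; pathfinish \<sigma> = pathstart \<sigma>; path_image \<sigma> \<subseteq> V - {y};
          winding_number (\<psi> \<circ> \<sigma>) (\<psi> y) = 1\<rbrakk> \<Longrightarrow> winding_number \<sigma> y = 1"
    using orient_pres_chart[OF \<psi> y] by metis
  obtain e\<phi> where e\<phi>: "0 < e\<phi>" "cball x e\<phi> \<subseteq> U" "inj_on \<phi> (cball x e\<phi>)"
    "\<And>r. 0 < r \<Longrightarrow> r < e\<phi> \<Longrightarrow> winding_number (\<phi> \<circ> circlepath x r) (\<phi> x) = 1"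
    using orient_pres_small_circles[OF \<phi> x] by metis
  have "open (ball x e\<phi> \<inter> \<iota> -` V)"
    using continuous_on_subset[OF \<iota>(1)] e\<phi>(2) V(1) ball_subset_cball
    by (intro continuous_open_preimage) blast+
  then obtain \<delta> where \<delta>: "0 < \<delta>" "cball x \<delta> \<subseteq> ball x e\<phi> \<inter> \<iota> -` V"
    using open_contains_cball e\<phi>(1) V(2) by (metis IntI centre_in_ball vimageI y_def)
  show "\<exists>e>0. \<forall>r. 0 < r \<and> r < e \<longrightarrow> wind (\<iota> \<circ> circ x r) (\<iota> x) = 1"
  proof (intro exI conjI allI impI)
    fix r assume r: "0 < r \<and> r < \<delta>"
    have "sphere x r \<subseteq> cball x \<delta>" using r by auto
    then have sphere: "sphere x r \<subseteq> cball x e\<phi> \<inter> \<iota> -` V" "x \<notin> sphere x r"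
      using \<delta>(2) ball_subset_cball r by auto
    have "\<phi> x \<notin> \<phi> ` sphere x r"
      using e\<phi>(1) sphere inj_on_image_mem_iff[OF e\<phi>(3)] by auto
    have avoid: "y \<notin> \<iota> ` sphere x r"
    proof
      assume "y \<in> \<iota> ` sphere x r"
      then obtain z where z: "z \<in> sphere x r" "\<iota> z = \<iota> x" by (auto simp: y_def)
      moreover have "z \<in> U" using z(1) sphere(1) e\<phi>(2) by blast
      ultimately have "\<phi> z = \<phi> x"
        using \<iota>(3)[of z] \<iota>(3)[OF x] by simp
      with z(1) \<open>\<phi> x \<notin> \<phi> ` sphere x r\<close> show False by (metis image_eqI)
    qed
    have cont: "continuous_on (sphere x r) \<iota>"
      by (rule continuous_on_subset[OF \<iota>(1)]) (use e\<phi>(2) sphere(1) in blast)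
    have \<sigma>: "path (\<iota> \<circ> circlepath x r)" "pathfinish (\<iota> \<circ> circlepath x r) = pathstart (\<iota> \<circ> circlepath x r)"
      "path_image (\<iota> \<circ> circlepath x r) \<subseteq> V - {y}"
      using closed_path_circlepath_image[OF _ cont] r sphere(1) avoid by auto
    have "circlepath x r t \<in> U" for t
      using circlepath_in_sphere[of r x t] r sphere(1) e\<phi>(2) by auto
    then have "\<psi> \<circ> (\<iota> \<circ> circlepath x r) = \<phi> \<circ> circlepath x r"
      using \<iota>(3) by (simp add: fun_eq_iff)
    moreover have "r < e\<phi>"
      using r \<delta> cball_subset_ball_iff[of x \<delta> x e\<phi>] by auto
    ultimately have "winding_number (\<psi> \<circ> (\<iota> \<circ> circlepath x r)) (\<psi> y) = 1"
      using e\<phi>(4) r \<iota>(3)[OF x] by (simp add: y_def)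
    then have "winding_number (\<iota> \<circ> circlepath x r) y = 1"
      by (rule chart[OF \<sigma>])
    then show "wind (\<iota> \<circ> circ x r) (\<iota> x) = 1"
      using wind_circ_eq_winding_number[of r x \<iota>] r cont avoid by (simp add: y_def)
  qed (use \<delta> in simp)
qed

lemma local_homeo_lift_unique:
  assumes "local_homeo U \<phi>" "connected S"
    and "continuous_on S f" "f ` S \<subseteq> U" "continuous_on S g" "g ` S \<subseteq> U"
    and "\<And>x. x \<in> S \<Longrightarrow> \<phi> (f x) = \<phi> (g x)" "a \<in> S" "f a = g a" "x \<in> S"
  shows "f x = g x"
proof -
  have "openin (top_of_set S) {x \<in> S. f x - g x = 0}"
  proof (rule openin_subopen[THEN iffD2], intro ballI)
    fix x assume "x \<in> {x \<in> S. f x - g x = 0}"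
    then have x: "x \<in> S" "f x = g x" by auto
    obtain V h where V: "open V" "f x \<in> V" "homeomorphism V (\<phi> ` V) \<phi> h"
      using assms(1,4) x(1) unfolding local_homeo_def by blast
    define T where "T = (S \<inter> f -` V) \<inter> (S \<inter> g -` V)"
    have "openin (top_of_set S) T"
      unfolding T_def using assms(3,5) V(1) by (intro openin_Int continuous_openin_preimage_gen)
    moreover have "f z = g z" if "z \<in> T" for z
    proof -
      have "f z \<in> V" "g z \<in> V" "\<phi> (f z) = \<phi> (g z)"
        using that assms(7) by (auto simp: T_def)
      then show ?thesis by (metis homeomorphism_apply1[OF V(3)])
    qed
    ultimately show "\<exists>T. openin (top_of_set S) T \<and> x \<in> T \<and> T \<subseteq> {x \<in> S. f x - g x = 0}"
      using x V(2) by (auto simp: T_def)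
  qed
  then have "\<forall>x\<in>S. f x - g x = 0"
    using assms(2,3,5,8,9) by (intro continuous_levelset_openin continuous_intros) auto
  then show ?thesis using assms(10) by simp
qed

definition immersion :: "(complex \<Rightarrow> complex) \<Rightarrow> (complex \<Rightarrow> complex) \<Rightarrow> (complex \<Rightarrow> complex) \<Rightarrow> bool"
  where "immersion \<phi> \<psi> \<iota> \<longleftrightarrow> continuous_on Disk \<iota> \<and> \<iota> ` Disk \<subseteq> Disk \<and> \<iota> 0 = 0 \<and>
      (\<forall>x\<in>Disk. \<psi> (\<iota> x) = \<phi> x)"

lemma immerses_iff_immersion: "immerses \<phi> \<psi> \<longleftrightarrow> (\<exists>\<iota>. immersion \<phi> \<psi> \<iota>)"
  by (simp add: immerses_def immersion_def)

lemma immersion_id: "immersion \<phi> \<phi> id"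
  by (simp add: immersion_def)

lemma immersion_comp:
  assumes "immersion \<phi> \<psi> \<iota>" "immersion \<psi> \<theta> \<kappa>"
  shows "immersion \<phi> \<theta> (\<kappa> \<circ> \<iota>)"
  using assms unfolding immersion_def
  by (auto intro: continuous_on_compose2[of Disk \<kappa> Disk \<iota>] simp: image_subset_iff)

lemma immersion_self_eq_id:
  assumes "local_homeo Disk \<phi>" "immersion \<phi> \<phi> f" "x \<in> Disk"
  shows "f x = x"
  using assms(2) local_homeo_lift_unique[OF assms(1), of Disk f id 0 x] assms(3)
  by (simp add: immersion_def Disk_def)

lemma immerses_refl: "immerses \<phi> \<phi>"
  unfolding immerses_iff_immersion using immersion_id by blast

lemma immerses_trans: "immerses \<phi> \<psi> \<Longrightarrow> immerses \<psi> \<theta> \<Longrightarrow> immerses \<phi> \<theta>"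
  unfolding immerses_iff_immersion using immersion_comp by blast

lemma iso_plh_imp_immerses:
  assumes "iso_plh \<phi> \<psi>"
  shows "immerses \<phi> \<psi>" "immerses \<psi> \<phi>"
proof -
  obtain h k where hk: "homeomorphism Disk Disk h k" "h 0 = 0" "\<And>y. y \<in> Disk \<Longrightarrow> \<psi> y = \<phi> (k y)"
    using assms unfolding iso_plh_def by blast
  have h: "continuous_on Disk h" "h ` Disk = Disk" "\<And>x. x \<in> Disk \<Longrightarrow> k (h x) = x"
    and k: "continuous_on Disk k" "k ` Disk = Disk"
    using hk(1) unfolding homeomorphism_def by auto
  have "k 0 = 0"
    using h(3)[of 0] hk(2) by (simp add: Disk_def)
  moreover have "\<psi> (h x) = \<phi> x" if "x \<in> Disk" for x
  proof -
    have "h x \<in> Disk" using h(2) that by blast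
    then show ?thesis using hk(3) h(3)[OF that] by simp
  qed
  ultimately have "immersion \<phi> \<psi> h" "immersion \<psi> \<phi> k"
    using h k hk(2,3) unfolding immersion_def by auto
  then show "immerses \<phi> \<psi>" "immerses \<psi> \<phi>"
    using immerses_iff_immersion by blast+
qed

lemma immerses_antisym:
  assumes "pointed_lh \<phi>" "pointed_lh \<psi>" "immerses \<phi> \<psi>" "immerses \<psi> \<phi>"
  shows "iso_plh \<phi> \<psi>"
proof -
  have \<phi>: "local_homeo Disk \<phi>" "orient_pres Disk \<phi>" and \<psi>: "local_homeo Disk \<psi>" "orient_pres Disk \<psi>"
    using assms(1,2) unfolding pointed_lh_def by auto
  obtain \<iota> \<kappa> where \<iota>: "immersion \<phi> \<psi> \<iota>" and \<kappa>: "immersion \<psi> \<phi> \<kappa>"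
    using assms(3,4) unfolding immerses_iff_immersion by blast
  have \<iota>': "continuous_on Disk \<iota>" "\<iota> ` Disk \<subseteq> Disk" "\<iota> 0 = 0" "\<And>x. x \<in> Disk \<Longrightarrow> \<psi> (\<iota> x) = \<phi> x"
    and \<kappa>': "continuous_on Disk \<kappa>" "\<kappa> ` Disk \<subseteq> Disk" "\<And>y. y \<in> Disk \<Longrightarrow> \<phi> (\<kappa> y) = \<psi> y"
    using \<iota> \<kappa> unfolding immersion_def by auto
  have "homeomorphism Disk Disk \<iota> \<kappa>"
  proof (rule homeomorphismI[OF \<iota>'(1) \<kappa>'(1) \<iota>'(2) \<kappa>'(2)])
    show "\<kappa> (\<iota> x) = x" if "x \<in> Disk" for x
      using immersion_self_eq_id[OF \<phi>(1) immersion_comp[OF \<iota> \<kappa>] that] by simp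
    show "\<iota> (\<kappa> y) = y" if "y \<in> Disk" for y
      using immersion_self_eq_id[OF \<psi>(1) immersion_comp[OF \<kappa> \<iota>] that] by simp
  qed
  moreover have "orient_pres Disk \<iota>"
    using \<phi> \<psi> \<iota>'(1,2,4) by (rule orient_pres_lift)
  ultimately show ?thesis
    unfolding iso_plh_def using \<iota>'(3) \<kappa>'(3) by metis
qed

lemma immerses_iso_iff:
  assumes "iso_plh \<phi> \<phi>'" "iso_plh \<psi> \<psi>'"
  shows "immerses \<phi> \<psi> \<longleftrightarrow> immerses \<phi>' \<psi>'"
  using immerses_trans iso_plh_imp_immerses[OF assms(1)] iso_plh_imp_immerses[OF assms(2)] by blast

theorem mainTheorem1:
  shows "(\<forall>\<phi> \<psi>. pointed_lh \<phi> \<and> pointed_lh \<psi> \<and> immerses \<phi> \<psi> \<and> immerses \<psi> \<phi>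
            \<longrightarrow> iso_plh \<phi> \<psi>)
       \<and> (\<forall>\<phi> \<phi>' \<psi> \<psi>'. pointed_lh \<phi> \<and> pointed_lh \<phi>' \<and> pointed_lh \<psi> \<and> pointed_lh \<psi>' \<and>
            iso_plh \<phi> \<phi>' \<and> iso_plh \<psi> \<psi>' \<longrightarrow> (immerses \<phi> \<psi> \<longleftrightarrow> immerses \<phi>' \<psi>'))
       \<and> (\<forall>\<phi>. pointed_lh \<phi> \<longrightarrow> immerses \<phi> \<phi>)
       \<and> (\<forall>\<phi> \<psi> \<theta>. pointed_lh \<phi> \<and> pointed_lh \<psi> \<and> pointed_lh \<theta> \<and>
            immerses \<phi> \<psi> \<and> immerses \<psi> \<theta> \<longrightarrow> immerses \<phi> \<theta>)"
proof (intro conjI allI impI)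
  show "iso_plh \<phi> \<psi>"
    if "pointed_lh \<phi> \<and> pointed_lh \<psi> \<and> immerses \<phi> \<psi> \<and> immerses \<psi> \<phi>" for \<phi> \<psi>
    using that immerses_antisym by blast
  show "immerses \<phi> \<psi> \<longleftrightarrow> immerses \<phi>' \<psi>'"
    if "pointed_lh \<phi> \<and> pointed_lh \<phi>' \<and> pointed_lh \<psi> \<and> pointed_lh \<psi>' \<and> iso_plh \<phi> \<phi>' \<and> iso_plh \<psi> \<psi>'"
    for \<phi> \<phi>' \<psi> \<psi>'
    using that immerses_iso_iff by blast
  show "immerses \<phi> \<phi>" for \<phi>
    by (rule immerses_refl)
  show "immerses \<phi> \<theta>"
    if "pointed_lh \<phi> \<and> pointed_lh \<psi> \<and> pointed_lh \<theta> \<and> immerses \<phi> \<psi> \<and> immerses \<psi> \<theta>" for \<phi> \<psi> \<theta>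
    using that immerses_trans by blast
qed

end
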